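(* Fix a solution point $i$ with Jacobian value $J_i>0$. For a state $\hat{\mathbf U}=J_i[\rho,\rho V_1,\rho V_2,\rho V_3,\rho E]^\top\in\mathbb R^5$ with $\rho>0$, let $\mathrm{IE}(\hat{\mathbf U})=\hat u_5-\dfrac{\hat u_2^2+\hat u_3^2+\hat u_4^2}{2\hat u_1}$ denote its internal energy (where $\hat u_k$ are the components of $\hat{\mathbf U}$). Let $\hat{\mathbf U}_1,\hat{\mathbf U}_p\in\mathbb R^5$ be given, with $\hat{\mathbf U}_1$ having positive density $(\rho_1)_i>0$ and positive internal energy $\mathrm{IE}(\hat{\mathbf U}_1)>0$. For $\theta\in[0,1]$ put $\hat{\mathbf U}(\theta)=(1-\theta)\hat{\mathbf U}_1+\theta\hat{\mathbf U}_p$ with density $\rho_i(\theta)$ (first component divided by $J_i$). Let $\aleph\in(0,1)$, $\epsilon^{\rho}_i=(\rho_1)_i\aleph$, $\epsilon^{\mathrm{IE}}_i=\mathrm{IE}(\hat{\mathbf U}_1)\aleph$, and let $H^{\rho}_i=\{\theta\in[0,1]:\rho_i(\theta)\ge\epsilon^{\rho}_i\}=[0,\theta^{\rho}_i]$ with $0<\theta^{\rho}_i\le1$. Define $$H^{\mathrm{IE}}_i=\{\theta\in H^{\rho}_i\;:\;\mathrm{IE}(\hat{\mathbf U}(\theta))\ge\epsilon^{\mathrm{IE}}_i\}.$$ Then $H^{\mathrm{IE}}_i=[0,\theta^{\mathrm{IE}}_i]$ for some $0<\theta^{\mathrm{IE}}_i\le\theta^{\rho}_i$. Moreover: (1) if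 $0\le\theta<\theta^{\mathrm{IE}}_i$, then $\mathrm{IE}(\hat{\mathbf U}(\theta))>\epsilon^{\mathrm{IE}}_i$; and (2) if $\theta^{\mathrm{IE}}_i<\theta^{\rho}_i$, then $\mathrm{IE}(\hat{\mathbf U}(\theta^{\mathrm{IE}}_i))=\epsilon^{\mathrm{IE}}_i$.
   Context: $\hat{\mathbf U}_1$ and $\hat{\mathbf U}_p$ are the first-order (positivity-preserving) and $p$th-order updates at a solution point of a spectral collocation scheme; $\hat{\mathbf U}(\theta)$ is their convex blend with flux limiter $\theta$. The fact that $H^{\rho}_i$ is an interval $[0,\theta^\rho_i]$ with $0<\theta^\rho_i\le 1$ follows since $\rho_i(\theta)$ is affine in $\theta$ with $\rho_i(0)>\epsilon^\rho_i$. *)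

theory Defs
  imports "HOL-Analysis.Analysis" "HOL-Library.Numeral_Type"
begin

definition IE :: "real ^ 5 \<Rightarrow> real" where
  "IE U = U $ 5 - ((U $ 2)\<^sup>2 + (U $ 3)\<^sup>2 + (U $ 4)\<^sup>2) / (2 * U $ 1)"

definition blend :: "real ^ 5 \<Rightarrow> real ^ 5 \<Rightarrow> real \<Rightarrow> real ^ 5" where
  "blend U1 Up \<theta> = (1 - \<theta>) *\<^sub>R U1 + \<theta> *\<^sub>R Up"

end

theory Submission
  imports Defs
begin

(* The internal energy is concave on the half-space of positive density: each kinetic term
   (m, rho) |-> m^2 / rho is the perspective of the convex function m^2, hence jointly convex.
   On H^rho the density of the blend stays positive, so theta |-> IE (U theta) is concave and
   continuous on [0, theta^rho], and it exceeds eps^IE at theta = 0. The superlevel set of such a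
   function is a closed interval [0, theta^IE] with theta^IE > 0; concavity along the chord from 0
   to theta^IE gives the strict inequality below theta^IE, and continuity forces equality at
   theta^IE whenever theta^IE < theta^rho. *)

lemma square_div_convex_ineq:
  fixes a b x y t :: real
  assumes "0 < a" "0 < b" "0 \<le> t" "t \<le> 1"
  shows "((1 - t) * x + t * y)\<^sup>2 / ((1 - t) * a + t * b) \<le> (1 - t) * (x\<^sup>2 / a) + t * (y\<^sup>2 / b)"
proof -
  define d where "d = (1 - t) * a + t * b"
  have "0 < d"
    unfolding d_def using assms by (cases "t = 1") (auto intro: add_pos_nonneg)
  have "(1 - t) * (x\<^sup>2 / a) + t * (y\<^sup>2 / b) - ((1 - t) * x + t * y)\<^sup>2 / d
      = t * (1 - t) * (x * b - y * a)\<^sup>2 / (a * b * d)"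
    using assms \<open>0 < d\<close> unfolding d_def by (simp add: field_simps power2_eq_square)
  also have "\<dots> \<ge> 0"
    using assms \<open>0 < d\<close> by simp
  finally show ?thesis
    unfolding d_def by simp
qed

lemma convex_positive_component: "convex {U :: real ^ 'n. 0 < U $ i}"
  using convex_halfspace_gt[of 0 "axis i 1"] by (simp add: cart_eq_inner_axis inner_commute)

lemma convex_on_square_div_component:
  "convex_on {U :: real ^ 'n. 0 < U $ i} (\<lambda>U. (U $ k)\<^sup>2 / U $ i)"
proof (rule convex_onI)
  fix t :: real and U V :: "real ^ 'n"
  assume "0 < t" "t < 1" "U \<in> {U. 0 < U $ i}" "V \<in> {U. 0 < U $ i}"
  then show "((1 - t) *\<^sub>R U + t *\<^sub>R V) $ k ^ 2 / ((1 - t) *\<^sub>R U + t *\<^sub>R V) $ i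
      \<le> (1 - t) * ((U $ k)\<^sup>2 / U $ i) + t * ((V $ k)\<^sup>2 / V $ i)"
    using square_div_convex_ineq[of "U $ i" "V $ i" t] by simp
qed (rule convex_positive_component)

lemma IE_alt_def: "IE U = U $ 5 - ((U $ 2)\<^sup>2 / U $ 1 + (U $ 3)\<^sup>2 / U $ 1 + (U $ 4)\<^sup>2 / U $ 1) / 2"
  unfolding IE_def by (simp add: add_divide_distrib)

lemma concave_on_IE: "concave_on {U. 0 < U $ 1} IE"
proof -
  have "concave_on {U :: real ^ 5. 0 < U $ 1} (\<lambda>U. U $ 5)"
    by (simp add: concave_on_iff convex_positive_component)
  moreover have "convex_on {U :: real ^ 5. 0 < U $ 1}
      (\<lambda>U. ((U $ 2)\<^sup>2 / U $ 1 + (U $ 3)\<^sup>2 / U $ 1 + (U $ 4)\<^sup>2 / U $ 1) / 2)"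
    by (intro convex_on_cdiv convex_on_add convex_on_square_div_component) simp
  ultimately show ?thesis
    unfolding IE_alt_def by (rule concave_on_diff)
qed

lemma continuous_on_IE: "continuous_on {U. 0 < U $ 1} IE"
  unfolding IE_def by (intro continuous_intros) auto

lemma blend_convex_combination:
  "blend U V ((1 - t) * a + t * b) = (1 - t) *\<^sub>R blend U V a + t *\<^sub>R blend U V b"
  unfolding blend_def by (simp add: algebra_simps)

lemma blend_0 [simp]: "blend U V 0 = U"
  unfolding blend_def by simp

lemma continuous_on_blend: "continuous_on T (blend U V)"
  unfolding blend_def by (intro continuous_intros)

lemma concave_on_comp_blend:
  assumes "concave_on S g" "convex T" "blend U V ` T \<subseteq> S"
  shows "concave_on T (\<lambda>\<theta>. g (blend U V \<theta>))"
  unfolding concave_on_def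
proof (rule convex_onI)
  fix t x y :: real
  assume "0 < t" "t < 1" "x \<in> T" "y \<in> T"
  then show "- g (blend U V ((1 - t) *\<^sub>R x + t *\<^sub>R y))
      \<le> (1 - t) * - g (blend U V x) + t * - g (blend U V y)"
    using concave_onD[OF assms(1), of t "blend U V x" "blend U V y"] assms(3)
    by (simp add: blend_convex_combination image_subset_iff)
qed fact

lemma concave_on_gt_between:
  fixes f :: "real \<Rightarrow> real"
  assumes "concave_on S f" "a \<in> S" "b \<in> S" "c < f a" "c \<le> f b" "a \<le> x" "x < b"
  shows "c < f x"
proof -
  define s where "s = (x - a) / (b - a)"
  have s: "0 \<le> s" "s < 1"
    using assms(6,7) by (auto simp: s_def divide_simps)
  have "c = (1 - s) * c + s * c"
    by (simp add: algebra_simps)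
  also have "\<dots> < (1 - s) * f a + s * f b"
    using s assms(4,5) by (intro add_less_le_mono mult_strict_left_mono mult_left_mono) auto
  also have "\<dots> \<le> f ((1 - s) *\<^sub>R a + s *\<^sub>R b)"
    using concave_onD[OF assms(1)] s assms(2,3) by simp
  also have "s * (b - a) = x - a"
    using assms(6,7) by (simp add: s_def)
  then have "(1 - s) *\<^sub>R a + s *\<^sub>R b = x"
    by (simp add: algebra_simps)
  finally show ?thesis .
qed

lemma continuous_on_Icc_gt_right:
  fixes f :: "real \<Rightarrow> real"
  assumes "continuous_on {a..b} f" "a \<le> x" "x < b" "c < f x"
  obtains y where "x < y" "y \<le> b" "c < f y"
proof -
  obtain d where "d > 0" and d: "\<forall>y\<in>{a..b}. dist y x < d \<longrightarrow> dist (f y) (f x) < f x - c"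
    using assms unfolding continuous_on_iff
    by (metis atLeastAtMost_iff diff_gt_0_iff_gt less_imp_le)
  define y where "y = min (x + d / 2) b"
  have "y \<in> {a..b}" "dist y x < d" "x < y" "y \<le> b"
    unfolding y_def using \<open>d > 0\<close> assms(2,3) by (auto simp: dist_real_def)
  then have "dist (f y) (f x) < f x - c"
    using d by blast
  then have "c < f y"
    unfolding dist_real_def by arith
  then show thesis
    using that \<open>x < y\<close> \<open>y \<le> b\<close> by blast
qed

lemma concave_superlevel_set_Icc:
  fixes f :: "real \<Rightarrow> real"
  assumes cont: "continuous_on {0..r} f" and conc: "concave_on {0..r} f"
    and "0 < r" and "c < f 0"
  obtains t where "0 < t" "t \<le> r" "{x \<in> {0..r}. c \<le> f x} = {0..t}"
    "\<And>x. 0 \<le> x \<Longrightarrow> x < t \<Longrightarrow> c < f x" "t < r \<Longrightarrow> f t = c"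
proof -
  define T where "T = {x \<in> {0..r}. c \<le> f x}"
  have "closed T"
    unfolding T_def using continuous_closed_preimage[OF cont closed_atLeastAtMost, of "{c..}"]
    by (simp add: vimage_def Int_def)
  moreover have "0 \<in> T" "bdd_above T"
    using \<open>0 < r\<close> \<open>c < f 0\<close> unfolding T_def by (auto intro: bdd_aboveI[of _ r])
  ultimately have "Sup T \<in> T"
    using closed_contains_Sup by blast
  define t where "t = Sup T"
  have t: "0 \<le> t" "t \<le> r" "c \<le> f t"
    using \<open>Sup T \<in> T\<close> unfolding t_def T_def by auto
  have upper: "x \<le> t" if "x \<in> T" for x
    unfolding t_def using cSup_upper[OF that \<open>bdd_above T\<close>] .
  have strict: "c < f x" if "0 \<le> x" "x < t" for x
    using concave_on_gt_between[OF conc _ _ \<open>c < f 0\<close> t(3) that] t by simp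
  have "T = {0..t}"
  proof
    show "T \<subseteq> {0..t}"
      using upper unfolding T_def by auto
    show "{0..t} \<subseteq> T"
    proof
      fix x
      assume x: "x \<in> {0..t}"
      then have "c \<le> f x"
        using strict[of x] t(3) by (cases "x = t") auto
      then show "x \<in> T"
        using x t(2) unfolding T_def by auto
    qed
  qed
  moreover have "0 < t"
  proof -
    obtain y where "0 < y" "y \<le> r" "c < f y"
      using continuous_on_Icc_gt_right[OF cont order_refl \<open>0 < r\<close> \<open>c < f 0\<close>] .
    then have "y \<in> T"
      unfolding T_def by simp
    with \<open>0 < y\<close> show ?thesis
      using upper by fastforce
  qed
  moreover have "f t = c" if t_lt_r: "t < r"
  proof (rule ccontr)
    assume "f t \<noteq> c"
    with t(3) have "c < f t"
      by simp
    then obtain y where "t < y" "y \<le> r" "c < f y"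
      using continuous_on_Icc_gt_right[OF cont t(1) t_lt_r] by blast
    with t(1) have "y \<in> T"
      unfolding T_def by simp
    with \<open>t < y\<close> show False
      using upper by fastforce
  qed
  ultimately show thesis
    using that t(2) strict unfolding T_def by blast
qed

theorem lemma2:
  fixes J aleph \<theta>\<rho> :: real and U1 Up :: "real ^ 5"
  assumes J_pos: "J > 0"
    and rho1_pos: "U1 $ 1 / J > 0"
    and IE1_pos: "IE U1 > 0"
    and aleph: "0 < aleph" "aleph < 1"
    and H_rho: "{\<theta> \<in> {0..1}. blend U1 Up \<theta> $ 1 / J \<ge> (U1 $ 1 / J) * aleph} = {0..\<theta>\<rho>}"
    and theta_rho: "0 < \<theta>\<rho>" "\<theta>\<rho> \<le> 1"
  shows "\<exists>\<theta>IE. 0 < \<theta>IE \<and> \<theta>IE \<le> \<theta>\<rho> \<and>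
           {\<theta> \<in> {\<theta> \<in> {0..1}. blend U1 Up \<theta> $ 1 / J \<ge> (U1 $ 1 / J) * aleph}. IE (blend U1 Up \<theta>) \<ge> IE U1 * aleph} = {0..\<theta>IE} \<and>
           (\<forall>\<theta>. 0 \<le> \<theta> \<and> \<theta> < \<theta>IE \<longrightarrow> IE (blend U1 Up \<theta>) > IE U1 * aleph) \<and>
           (\<theta>IE < \<theta>\<rho> \<longrightarrow> IE (blend U1 Up \<theta>IE) = IE U1 * aleph)"
proof -
  have density_pos: "blend U1 Up ` {0..\<theta>\<rho>} \<subseteq> {U. 0 < U $ 1}"
  proof
    fix U
    assume "U \<in> blend U1 Up ` {0..\<theta>\<rho>}"
    then have "U1 $ 1 / J * aleph \<le> U $ 1 / J"
      using H_rho[symmetric] by auto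
    moreover have "0 < U1 $ 1 / J * aleph"
      using rho1_pos aleph(1) by (rule mult_pos_pos)
    ultimately have "0 < U $ 1 / J"
      by linarith
    with J_pos show "U \<in> {U. 0 < U $ 1}"
      by (simp add: zero_less_divide_iff)
  qed
  have "continuous_on {0..\<theta>\<rho>} (\<lambda>\<theta>. IE (blend U1 Up \<theta>))"
    using continuous_on_IE continuous_on_blend density_pos by (rule continuous_on_compose2)
  moreover have "concave_on {0..\<theta>\<rho>} (\<lambda>\<theta>. IE (blend U1 Up \<theta>))"
    using concave_on_IE convex_real_interval(5) density_pos by (rule concave_on_comp_blend)
  moreover note \<open>0 < \<theta>\<rho>\<close>
  moreover have "IE U1 * aleph < IE (blend U1 Up 0)"
    using IE1_pos aleph by simp
  ultimately show ?thesis
    unfolding H_rho by (rule concave_superlevel_set_Icc) blast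
qed

end
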